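(* A continuous linear operator $L$ on $\mathcal{D}'(\mathbb{R}^d)$ satisfies $L\circ D_a=D_a\circ L$ for all $a\in\mathbb{R}_*^d$ if and only if there is $T\in\mathcal{D}_H'(\mathbb{R}^d)$ such that $L(S)=S\star T$ for all $S\in\mathcal{D}'(\mathbb{R}^d)$. In this case $T=L(\delta_{\mathbf 1})$.
   Context: $\mathbb{R}_*=\mathbb{R}\setminus\{0\}$; products and quotients of vectors are coordinatewise; $\mathbf 1=(1,\dots,1)$; $\sigma(a)=\prod_j a_j/|a_j|$. The dilation $D_a$ on $\mathcal{D}'(\mathbb{R}^d)$ is $(D_aT)\varphi=T_x\Big(\frac{\sigma(a)}{a_1\cdots a_d}\varphi\big(\tfrac{x}{a}\big)\Big)$. $\mathcal{D}_H'(\mathbb{R}^d)$ is the set of $T\in\mathcal{D}'(\mathbb{R}^d)$ such that for every $\varphi\in\mathcal{D}(\mathbb{R}^d)$ the function $y\mapsto T_\xi\varphi(\xi y)$, $y\in\mathbb{R}_*^d$, is the restriction of a function in $\mathcal{D}(\mathbb{R}^d)$, denoted $M_T\varphi$. For $T\in\mathcal{D}_H'(\mathbb{R}^d)$ and $S\in\mathcal{D}'(\mathbb{R}^d)$, $(S\star T)\varphi=S(M_T\varphi)$, written $S_y(T_x\varphi(xy))$. *)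

theory Defs
  imports "HOL-Analysis.Analysis"
begin

text \<open>Points of R^d are vectors of type real^'n ('n finite, d = CARD('n)).
Test functions and distributions are complex valued.\<close>

type_synonym 'n testfun = "real^'n \<Rightarrow> complex"
type_synonym 'n distr = "'n testfun \<Rightarrow> complex"

definition cmult :: "real^'n \<Rightarrow> real^'n \<Rightarrow> real^'n" where
  "cmult x y = (\<chi> i. x $ i * y $ i)"

definition cdiv :: "real^'n \<Rightarrow> real^'n \<Rightarrow> real^'n" where
  "cdiv x y = (\<chi> i. x $ i / y $ i)"

definition ones :: "real^'n" where
  "ones = (\<chi> i. 1)"

definition Rstar :: "(real^'n) set" where
  "Rstar = {a. \<forall>i. a $ i \<noteq> 0}"

definition sgnprod :: "real^'n \<Rightarrow> real" where
  "sgnprod a = (\<Prod>i\<in>UNIV. a $ i / \<bar>a $ i\<bar>)"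

definition pdiff :: "'n::finite \<Rightarrow> 'n testfun \<Rightarrow> 'n testfun" where
  "pdiff i f = (\<lambda>x. frechet_derivative f (at x) (axis i 1))"

fun pdiffs :: "'n::finite list \<Rightarrow> 'n testfun \<Rightarrow> 'n testfun" where
  "pdiffs [] f = f"
| "pdiffs (i # is) f = pdiff i (pdiffs is f)"

definition smooth :: "'n::finite testfun \<Rightarrow> bool" where
  "smooth f \<longleftrightarrow> (\<forall>is x. pdiffs is f differentiable (at x))"

definition testfuns :: "'n::finite testfun set" where
  "testfuns = {\<phi>. smooth \<phi> \<and> compact (closure {x. \<phi> x \<noteq> 0})}"

definition seminorm :: "nat \<Rightarrow> 'n::finite testfun \<Rightarrow> real" where
  "seminorm N \<phi> = Sup {norm (pdiffs is \<phi> x) | is x. length is \<le> N}"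

text \<open>Distributions: linear functionals on D(R^d) satisfying the usual
continuity estimate on each compact set; by convention they vanish outside
D(R^d), so that equality of distributions is equality of HOL functions.\<close>
definition distributions :: "'n::finite distr set" where
  "distributions = {T.
     (\<forall>\<phi>. \<phi> \<notin> testfuns \<longrightarrow> T \<phi> = 0) \<and>
     (\<forall>\<phi>\<in>testfuns. \<forall>\<psi>\<in>testfuns. T (\<lambda>x. \<phi> x + \<psi> x) = T \<phi> + T \<psi>) \<and>
     (\<forall>\<phi>\<in>testfuns. \<forall>c. T (\<lambda>x. c * \<phi> x) = c * T \<phi>) \<and>
     (\<forall>K. compact K \<longrightarrow> (\<exists>C N. \<forall>\<phi>\<in>testfuns. {x. \<phi> x \<noteq> 0} \<subseteq> K \<longrightarrow>
            norm (T \<phi>) \<le> C * seminorm N \<phi>))}"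

definition dilation :: "real^'n::finite \<Rightarrow> 'n distr \<Rightarrow> 'n distr" where
  "dilation a T = (\<lambda>\<phi>. if \<phi> \<in> testfuns then
       T (\<lambda>x. complex_of_real (sgnprod a / (\<Prod>i\<in>UNIV. a $ i)) * \<phi> (cdiv x a))
     else 0)"

definition dirac :: "real^'n::finite \<Rightarrow> 'n distr" where
  "dirac p = (\<lambda>\<phi>. if \<phi> \<in> testfuns then \<phi> p else 0)"

definition hadamard_distr :: "'n::finite distr set" where
  "hadamard_distr = {T. T \<in> distributions \<and>
     (\<forall>\<phi>\<in>testfuns. \<exists>\<psi>\<in>testfuns. \<forall>y\<in>Rstar. \<psi> y = T (\<lambda>\<xi>. \<phi> (cmult \<xi> y)))}"

definition MT :: "'n::finite distr \<Rightarrow> 'n testfun \<Rightarrow> 'n testfun" where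
  "MT T \<phi> = (SOME \<psi>. \<psi> \<in> testfuns \<and> (\<forall>y\<in>Rstar. \<psi> y = T (\<lambda>\<xi>. \<phi> (cmult \<xi> y))))"

definition mconv :: "'n::finite distr \<Rightarrow> 'n distr \<Rightarrow> 'n distr" where
  "mconv S T = (\<lambda>\<phi>. if \<phi> \<in> testfuns then S (MT T \<phi>) else 0)"

text \<open>Continuous linear operators on D'(R^d) (weak-* topology).\<close>
definition cont_lin_op :: "('n::finite distr \<Rightarrow> 'n distr) \<Rightarrow> bool" where
  "cont_lin_op L \<longleftrightarrow>
     (\<forall>S\<in>distributions. L S \<in> distributions) \<and>
     (\<forall>S\<in>distributions. \<forall>S'\<in>distributions. L (\<lambda>\<phi>. S \<phi> + S' \<phi>) = (\<lambda>\<phi>. L S \<phi> + L S' \<phi>)) \<and>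
     (\<forall>S\<in>distributions. \<forall>c. L (\<lambda>\<phi>. c * S \<phi>) = (\<lambda>\<phi>. c * L S \<phi>)) \<and>
     (\<forall>S\<in>distributions. \<forall>\<psi>\<in>testfuns. \<forall>\<epsilon>>0. \<exists>F \<delta>. finite F \<and> F \<subseteq> testfuns \<and> \<delta> > 0 \<and>
        (\<forall>S'\<in>distributions. (\<forall>\<phi>\<in>F. norm (S' \<phi> - S \<phi>) < \<delta>) \<longrightarrow>
            norm (L S' \<psi> - L S \<psi>) < \<epsilon>))"

end

(*
  Weak-* continuity of L means that (L S) \<phi> depends only on finitely many values
  S \<phi>\<^sub>1, ..., S \<phi>\<^sub>m, so by finite-dimensional linear algebra (L S) \<phi> = S \<phi>' for the
  test function \<phi>' = \<Sum> c\<^sub>j \<phi>\<^sub>j. If L commutes with dilations, put T = L \<delta>\<^sub>1; since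
  D_(1/y) \<delta>\<^sub>1 is a nonzero multiple of \<delta>_y, we get \<phi>'(y) = (L \<delta>_y) \<phi> = T(\<phi>(\<xi> y)) for
  y in R_*^d. So T is in D_H' and, R_*^d being dense, \<phi>' = M_T \<phi>, i.e. L S = S \<star> T.
  Conversely M_T intertwines the dilations of test functions, so S \<mapsto> S \<star> T commutes
  with every D_a; and evaluating S \<star> T = L S at S = \<delta>\<^sub>1 gives T = L \<delta>\<^sub>1.
*)
theory Submission
  imports Defs
begin

section \<open>Coordinatewise arithmetic\<close>

lemma cmult_ones [simp]: "cmult x ones = x"
  by (simp add: cmult_def ones_def vec_eq_iff)

lemma ones_in_Rstar: "ones \<in> Rstar"
  by (simp add: ones_def Rstar_def)

lemma Rstar_cdiv: "y \<in> Rstar \<Longrightarrow> a \<in> Rstar \<Longrightarrow> cdiv y a \<in> Rstar"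
  by (simp add: cdiv_def Rstar_def)

lemma cdiv_cmult_cancel: "b \<in> Rstar \<Longrightarrow> cdiv (cmult x b) b = x"
  by (simp add: cmult_def cdiv_def Rstar_def vec_eq_iff)

lemma cdiv_cdiv_ones: "y \<in> Rstar \<Longrightarrow> cdiv x (cdiv ones y) = cmult x y"
  by (simp add: cdiv_def cmult_def ones_def Rstar_def vec_eq_iff)

lemma cdiv_ones_cdiv_ones: "y \<in> Rstar \<Longrightarrow> cdiv ones (cdiv ones y) = y"
  by (simp add: cdiv_def ones_def Rstar_def vec_eq_iff)

lemma cdiv_cmult: "cdiv (cmult x y) a = cmult x (cdiv y a)"
  by (simp add: cdiv_def cmult_def vec_eq_iff)

lemma cmult_axis: "cmult (axis i 1) b = b $ i *\<^sub>R axis i 1"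
  by (simp add: cmult_def vec_eq_iff axis_def)

lemma linear_cmult: "linear (\<lambda>x. cmult x b)"
  by (rule linearI) (simp_all add: cmult_def vec_eq_iff algebra_simps)

lemma linear_cdiv: "linear (\<lambda>x. cdiv x b)"
  by (rule linearI) (simp_all add: cdiv_def vec_eq_iff algebra_simps add_divide_distrib)

lemma abs_component_le_sum: "\<bar>b $ i\<bar> \<le> (\<Sum>j\<in>UNIV. \<bar>(b :: real^'n::finite) $ j\<bar>)"
  using member_le_sum[of i UNIV "\<lambda>j. \<bar>b $ j\<bar>"] by auto

lemma closure_Rstar: "closure (Rstar :: (real^'n::finite) set) = UNIV"
proof -
  have "x \<in> closure Rstar" for x :: "real^'n"
    unfolding closure_approachable
  proof (intro allI impI)
    fix e :: real assume e: "e > 0"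
    define t where "t = e / (2 * (real CARD('n) + 1))"
    have t: "t > 0" using e by (simp add: t_def)
    define z :: "real^'n" where "z = (\<chi> i. if x $ i = 0 then t else x $ i)"
    have "z \<in> Rstar" using t by (simp add: z_def Rstar_def)
    have "dist z x \<le> (\<Sum>i\<in>UNIV. \<bar>(z - x) $ i\<bar>)"
      unfolding dist_norm by (rule norm_le_l1_cart)
    also have "\<dots> \<le> real CARD('n) * t"
      using sum_mono[of UNIV "\<lambda>i. \<bar>(z - x) $ i\<bar>" "\<lambda>_. t"] t by (simp add: z_def)
    also have "\<dots> < e"
      using e by (simp add: t_def field_simps add_nonneg_pos)
    finally show "\<exists>y\<in>Rstar. dist y x < e"
      using \<open>z \<in> Rstar\<close> by blast
  qed
  then show ?thesis by blast
qed

section \<open>Test functions\<close>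

lemma testfuns_iff: "\<phi> \<in> testfuns \<longleftrightarrow> smooth \<phi> \<and> bounded {x. \<phi> x \<noteq> 0}"
  by (simp add: testfuns_def)

lemma pdiff_add:
  fixes f g :: "'n::finite testfun"
  assumes "f differentiable at x" "g differentiable at x"
  shows "pdiff i (\<lambda>x. f x + g x) x = pdiff i f x + pdiff i g x"
proof -
  have "((\<lambda>x. f x + g x) has_derivative
      (\<lambda>h. frechet_derivative f (at x) h + frechet_derivative g (at x) h)) (at x)"
    using assms by (intro has_derivative_add) (simp_all add: frechet_derivative_works)
  from frechet_derivative_at[OF this] show ?thesis
    unfolding pdiff_def by metis
qed

lemma pdiffs_add:
  fixes f g :: "'n::finite testfun"
  assumes "smooth f" "smooth g"
  shows "pdiffs is (\<lambda>x. f x + g x) = (\<lambda>x. pdiffs is f x + pdiffs is g x)"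
  by (induction "is") (use assms in \<open>auto simp: smooth_def pdiff_add\<close>)

lemma smooth_add: "smooth f \<Longrightarrow> smooth g \<Longrightarrow> smooth (\<lambda>x. f x + g x)"
  by (simp add: smooth_def pdiffs_add differentiable_add)

lemma has_derivative_scaled_cmult:
  fixes f :: "'n::finite testfun"
  assumes "f differentiable at (cmult x b)"
  shows "((\<lambda>x. k * f (cmult x b)) has_derivative
           (\<lambda>h. k * frechet_derivative f (at (cmult x b)) (cmult h b))) (at x)"
proof -
  have "((\<lambda>x. cmult x b) has_derivative (\<lambda>h. cmult h b)) (at x)"
    by (rule linear_imp_has_derivative[OF linear_cmult])
  from diff_chain_at[OF this] assms
  have "((\<lambda>x. f (cmult x b)) has_derivative
          (\<lambda>h. frechet_derivative f (at (cmult x b)) (cmult h b))) (at x)"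
    by (simp add: frechet_derivative_works o_def)
  then show ?thesis
    by (rule has_derivative_mult_right)
qed

lemma pdiff_scaled_cmult:
  fixes f :: "'n::finite testfun"
  assumes "f differentiable at (cmult x b)"
  shows "pdiff i (\<lambda>x. k * f (cmult x b)) x = (k * of_real (b $ i)) * pdiff i f (cmult x b)"
proof -
  have "linear (frechet_derivative f (at (cmult x b)))"
    using assms by (rule linear_frechet_derivative)
  then have "frechet_derivative f (at (cmult x b)) (cmult (axis i 1) b)
      = b $ i *\<^sub>R frechet_derivative f (at (cmult x b)) (axis i 1)"
    by (simp add: cmult_axis linear_scale)
  with frechet_derivative_at[OF has_derivative_scaled_cmult[OF assms, of k]] show ?thesis
    unfolding pdiff_def by (metis mult.assoc scaleR_conv_of_real)
qed

lemma pdiffs_scaled_cmult: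
  fixes \<phi> :: "'n::finite testfun"
  assumes "smooth \<phi>" and M: "\<And>i. \<bar>b $ i\<bar> \<le> M"
  shows "\<exists>c. norm c \<le> norm k * M ^ length is \<and>
             pdiffs is (\<lambda>x. k * \<phi> (cmult x b)) = (\<lambda>x. c * pdiffs is \<phi> (cmult x b))"
proof (induction "is")
  case Nil
  show ?case by auto
next
  case (Cons i "is")
  then obtain c where c: "norm c \<le> norm k * M ^ length is"
    and eq: "pdiffs is (\<lambda>x. k * \<phi> (cmult x b)) = (\<lambda>x. c * pdiffs is \<phi> (cmult x b))"
    by blast
  have "norm (c * of_real (b $ i)) \<le> norm k * M ^ length is * M"
    using c M[of i] by (simp add: norm_mult mult_mono')
  moreover have "pdiffs (i # is) (\<lambda>x. k * \<phi> (cmult x b))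
      = (\<lambda>x. (c * of_real (b $ i)) * pdiffs (i # is) \<phi> (cmult x b))"
    using assms(1) by (auto simp: smooth_def eq pdiff_scaled_cmult)
  ultimately show ?case
    by (intro exI[of _ "c * of_real (b $ i)"]) (simp add: ac_simps)
qed

lemma smooth_scaled_cmult:
  fixes \<phi> :: "'n::finite testfun"
  assumes "smooth \<phi>"
  shows "smooth (\<lambda>x. k * \<phi> (cmult x b))"
  unfolding smooth_def
proof (intro allI)
  fix "is" x
  obtain c where "pdiffs is (\<lambda>x. k * \<phi> (cmult x b)) = (\<lambda>x. c * pdiffs is \<phi> (cmult x b))"
    using pdiffs_scaled_cmult[OF assms abs_component_le_sum] by blast
  moreover have "pdiffs is \<phi> differentiable at (cmult x b)"
    using assms by (simp add: smooth_def)
  ultimately show "pdiffs is (\<lambda>x. k * \<phi> (cmult x b)) differentiable at x"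
    using has_derivative_scaled_cmult differentiable_def by metis
qed

lemma zero_in_testfuns: "(\<lambda>x. 0) \<in> (testfuns :: 'n::finite testfun set)"
proof -
  have "pdiffs is (\<lambda>x. 0 :: complex) = (\<lambda>x. 0)" for "is" :: "'n::finite list"
    by (induction "is") (auto simp: pdiff_def)
  then show ?thesis
    by (simp add: testfuns_iff smooth_def)
qed

lemma add_in_testfuns: "\<phi> \<in> testfuns \<Longrightarrow> \<psi> \<in> testfuns \<Longrightarrow> (\<lambda>x. \<phi> x + \<psi> x) \<in> testfuns"
  unfolding testfuns_iff
  by (auto simp: smooth_add intro: bounded_subset[of "{x. \<phi> x \<noteq> 0} \<union> {x. \<psi> x \<noteq> 0}"])

lemma scaled_cmult_in_testfuns:
  assumes "\<phi> \<in> testfuns" "b \<in> Rstar"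
  shows "(\<lambda>x. k * \<phi> (cmult x b)) \<in> testfuns"
proof -
  have "{x. k * \<phi> (cmult x b) \<noteq> 0} \<subseteq> (\<lambda>z. cdiv z b) ` {x. \<phi> x \<noteq> 0}"
    using cdiv_cmult_cancel[OF assms(2)] by (auto intro!: image_eqI)
  moreover have "bounded ((\<lambda>z. cdiv z b) ` {x. \<phi> x \<noteq> 0})"
    using assms(1) linear_cdiv unfolding testfuns_iff
    by (intro bounded_linear_image) (auto simp: linear_conv_bounded_linear)
  ultimately show ?thesis
    using assms(1) unfolding testfuns_iff by (auto simp: smooth_scaled_cmult intro: bounded_subset)
qed

lemma cmult_in_testfuns: "\<phi> \<in> testfuns \<Longrightarrow> b \<in> Rstar \<Longrightarrow> (\<lambda>x. \<phi> (cmult x b)) \<in> testfuns"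
  using scaled_cmult_in_testfuns[of \<phi> b 1] by simp

lemma scale_in_testfuns: "\<phi> \<in> testfuns \<Longrightarrow> (\<lambda>x. k * \<phi> x) \<in> testfuns"
  using scaled_cmult_in_testfuns[OF _ ones_in_Rstar, of \<phi> k] by simp

lemma lincomb_in_testfuns:
  "finite F \<Longrightarrow> F \<subseteq> testfuns \<Longrightarrow> (\<lambda>x. \<Sum>\<phi>\<in>F. c \<phi> * \<phi> x) \<in> testfuns"
  by (induction F rule: finite_induct) (simp_all add: zero_in_testfuns add_in_testfuns scale_in_testfuns)

lemma continuous_on_testfun: "\<phi> \<in> testfuns \<Longrightarrow> continuous_on UNIV (pdiffs is \<phi>)"
  unfolding testfuns_iff smooth_def
  by (meson continuous_at_imp_continuous_on differentiable_imp_continuous_within)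

lemma testfuns_eqI:
  assumes "\<phi> \<in> testfuns" "\<psi> \<in> testfuns" "\<And>y. y \<in> Rstar \<Longrightarrow> \<phi> y = \<psi> y"
  shows "\<phi> = \<psi>"
proof -
  have "closed {x. \<phi> x = \<psi> x}"
    using continuous_on_testfun[of _ "[]"] assms(1,2) by (intro closed_Collect_eq) auto
  with assms(3) have "closure Rstar \<subseteq> {x. \<phi> x = \<psi> x}"
    by (intro closure_minimal) auto
  then show ?thesis
    by (auto simp: closure_Rstar)
qed

lemma pdiffs_outside_support:
  fixes \<phi> :: "'n::finite testfun"
  assumes "smooth \<phi>" "x \<notin> closure {x. \<phi> x \<noteq> 0}"
  shows "pdiffs is \<phi> x = 0"
  using assms(2)
proof (induction "is" arbitrary: x)
  case Nil
  then show ?case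
    using closure_subset[of "{x. \<phi> x \<noteq> 0}"] by auto
next
  case (Cons i "is")
  have "frechet_derivative (pdiffs is \<phi>) (at x) = frechet_derivative (\<lambda>_. 0) (at x)"
  proof (rule frechet_derivative_transform_within_open[where X="- closure {x. \<phi> x \<noteq> 0}"])
    show "pdiffs is \<phi> differentiable at x"
      using assms(1) by (simp add: smooth_def)
  qed (use Cons in auto)
  then show ?case
    by (simp add: pdiff_def)
qed

lemma pdiffs_bounded:
  fixes \<phi> :: "'n::finite testfun"
  assumes "\<phi> \<in> testfuns"
  shows "\<exists>B. \<forall>x. norm (pdiffs is \<phi> x) \<le> B"
proof -
  let ?K = "closure {x. \<phi> x \<noteq> 0}"
  have "compact (pdiffs is \<phi> ` ?K)"
    using assms continuous_on_testfun[OF assms]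
    by (intro compact_continuous_image) (auto simp: testfuns_def intro: continuous_on_subset)
  then obtain B where B: "\<forall>y\<in>pdiffs is \<phi> ` ?K. norm y \<le> B"
    using compact_imp_bounded bounded_iff by metis
  have "norm (pdiffs is \<phi> x) \<le> max B 0" for x
    using B pdiffs_outside_support[of \<phi> x "is"] assms by (cases "x \<in> ?K") (auto simp: testfuns_iff)
  then show ?thesis by blast
qed

lemma bdd_above_seminorm:
  fixes \<phi> :: "'n::finite testfun"
  assumes "\<phi> \<in> testfuns"
  shows "bdd_above {norm (pdiffs is \<phi> x) | is x. length is \<le> N}"
proof -
  obtain B where B: "\<And>is x. norm (pdiffs is \<phi> x) \<le> B is"
    using pdiffs_bounded[OF assms] by metis
  let ?Ls = "{is :: 'n list. set is \<subseteq> UNIV \<and> length is \<le> N}"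
  have "finite ?Ls"
    by (rule finite_lists_length_le) simp
  then have "B is \<le> Max (B ` ?Ls)" if "length is \<le> N" for "is"
    using that by (intro Max_ge) auto
  then show ?thesis
    using B by (intro bdd_aboveI[where M="Max (B ` ?Ls)"]) (fastforce intro: order_trans)
qed

lemma seminorm_upper:
  assumes "\<phi> \<in> testfuns" "length is \<le> N"
  shows "norm (pdiffs is \<phi> x) \<le> seminorm N \<phi>"
  unfolding seminorm_def
  by (rule cSup_upper[OF _ bdd_above_seminorm[OF assms(1)]]) (use assms(2) in blast)

lemma seminorm_nonneg: "\<phi> \<in> testfuns \<Longrightarrow> 0 \<le> seminorm N \<phi>"
  using seminorm_upper[of \<phi> "[]" N 0] by (simp add: order_trans[OF norm_ge_zero])

lemma seminorm_mono:
  assumes "\<phi> \<in> testfuns" "N \<le> M"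
  shows "seminorm N \<phi> \<le> seminorm M \<phi>"
  unfolding seminorm_def
proof (rule cSup_subset_mono[OF _ bdd_above_seminorm[OF assms(1)]])
  show "{norm (pdiffs is \<phi> x) | is x. length is \<le> N} \<noteq> {}"
    by (auto intro!: exI[of _ "[]"])
qed (use assms(2) in auto)

lemma seminorm_scaled_cmult_le:
  fixes b :: "real^'n::finite"
  shows "\<exists>C. \<forall>\<phi>\<in>testfuns. seminorm N (\<lambda>x. k * \<phi> (cmult x b)) \<le> C * seminorm N \<phi>"
proof -
  define M where "M = max 1 (\<Sum>i\<in>UNIV. \<bar>b $ i\<bar>)"
  have M: "M \<ge> 1" "\<And>i. \<bar>b $ i\<bar> \<le> M"
    using abs_component_le_sum[of b] by (auto simp: M_def intro: le_max_iff_disj[THEN iffD2])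
  have "seminorm N (\<lambda>x. k * \<phi> (cmult x b)) \<le> (norm k * M ^ N) * seminorm N \<phi>"
    if \<phi>: "\<phi> \<in> testfuns" for \<phi>
    unfolding seminorm_def[of N "\<lambda>x. k * \<phi> (cmult x b)"]
  proof (rule cSup_least)
    show "{norm (pdiffs is (\<lambda>x. k * \<phi> (cmult x b)) x) | is x. length is \<le> N} \<noteq> {}"
      by (auto intro!: exI[of _ "[]"])
  next
    fix z assume "z \<in> {norm (pdiffs is (\<lambda>x. k * \<phi> (cmult x b)) x) | is x. length is \<le> N}"
    then obtain "is" x where z: "z = norm (pdiffs is (\<lambda>x. k * \<phi> (cmult x b)) x)"
      and len: "length is \<le> N"
      by auto
    from \<phi> have "smooth \<phi>" by (simp add: testfuns_iff)
    then obtain c where c: "norm c \<le> norm k * M ^ length is"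
      and eq: "pdiffs is (\<lambda>x. k * \<phi> (cmult x b)) = (\<lambda>x. c * pdiffs is \<phi> (cmult x b))"
      using pdiffs_scaled_cmult[OF _ M(2)] by blast
    have "norm k * M ^ length is \<le> norm k * M ^ N"
      using M(1) len by (intro mult_left_mono power_increasing) auto
    with c have "norm c \<le> norm k * M ^ N" by linarith
    then show "z \<le> norm k * M ^ N * seminorm N \<phi>"
      unfolding z eq norm_mult
      by (intro mult_mono seminorm_upper[OF \<phi> len]) (use M(1) seminorm_nonneg[OF \<phi>] in auto)
  qed
  then show ?thesis by blast
qed

section \<open>Distributions\<close>

lemma distributionsI:
  assumes "\<And>\<phi>. \<phi> \<notin> testfuns \<Longrightarrow> S \<phi> = 0"
    and "\<And>\<phi> \<psi>. \<phi> \<in> testfuns \<Longrightarrow> \<psi> \<in> testfuns \<Longrightarrow> S (\<lambda>x. \<phi> x + \<psi> x) = S \<phi> + S \<psi>"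
    and "\<And>\<phi> c. \<phi> \<in> testfuns \<Longrightarrow> S (\<lambda>x. c * \<phi> x) = c * S \<phi>"
    and "\<And>K. compact K \<Longrightarrow> \<exists>C N. \<forall>\<phi>\<in>testfuns. {x. \<phi> x \<noteq> 0} \<subseteq> K \<longrightarrow>
           norm (S \<phi>) \<le> C * seminorm N \<phi>"
  shows "S \<in> distributions"
  using assms unfolding distributions_def by blast

lemma distributions_vanish: "S \<in> distributions \<Longrightarrow> \<phi> \<notin> testfuns \<Longrightarrow> S \<phi> = 0"
  unfolding distributions_def by blast

lemma distributions_add:
  "S \<in> distributions \<Longrightarrow> \<phi> \<in> testfuns \<Longrightarrow> \<psi> \<in> testfuns \<Longrightarrow>
     S (\<lambda>x. \<phi> x + \<psi> x) = S \<phi> + S \<psi>"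
  unfolding distributions_def by blast

lemma distributions_scale: "S \<in> distributions \<Longrightarrow> \<phi> \<in> testfuns \<Longrightarrow> S (\<lambda>x. c * \<phi> x) = c * S \<phi>"
  unfolding distributions_def by blast

lemma distributions_estimate:
  assumes "S \<in> distributions" "compact K"
  obtains C N where "C \<ge> 0"
    and "\<And>\<phi> M. \<phi> \<in> testfuns \<Longrightarrow> {x. \<phi> x \<noteq> 0} \<subseteq> K \<Longrightarrow> N \<le> M \<Longrightarrow>
           norm (S \<phi>) \<le> C * seminorm M \<phi>"
proof -
  have "\<exists>C N. \<forall>\<phi>\<in>testfuns. {x. \<phi> x \<noteq> 0} \<subseteq> K \<longrightarrow> norm (S \<phi>) \<le> C * seminorm N \<phi>"
    using assms by (simp add: distributions_def)
  then obtain C N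
    where CN: "\<And>\<phi>. \<phi> \<in> testfuns \<Longrightarrow> {x. \<phi> x \<noteq> 0} \<subseteq> K \<Longrightarrow> norm (S \<phi>) \<le> C * seminorm N \<phi>"
    by blast
  show thesis
  proof (rule that[of "\<bar>C\<bar>" N])
    fix \<phi> M assume \<phi>: "\<phi> \<in> testfuns" and supp: "{x. \<phi> x \<noteq> 0} \<subseteq> K" and "N \<le> M"
    have "norm (S \<phi>) \<le> C * seminorm N \<phi>"
      using CN[OF \<phi> supp] .
    also have "\<dots> \<le> \<bar>C\<bar> * seminorm N \<phi>"
      using seminorm_nonneg[OF \<phi>] by (intro mult_right_mono) auto
    also have "\<dots> \<le> \<bar>C\<bar> * seminorm M \<phi>"
      using seminorm_mono[OF \<phi> \<open>N \<le> M\<close>] by (intro mult_left_mono) auto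
    finally show "norm (S \<phi>) \<le> \<bar>C\<bar> * seminorm M \<phi>" .
  qed simp
qed

lemma distributions_zero: "S \<in> distributions \<Longrightarrow> S (\<lambda>x. 0) = 0"
  using distributions_scale[OF _ zero_in_testfuns, of S 0] by simp

lemma distributions_lincomb:
  assumes "S \<in> distributions" "finite F" "F \<subseteq> testfuns"
  shows "S (\<lambda>x. \<Sum>\<phi>\<in>F. c \<phi> * \<phi> x) = (\<Sum>\<phi>\<in>F. c \<phi> * S \<phi>)"
  using assms(2,3)
proof (induction F rule: finite_induct)
  case empty
  then show ?case
    using distributions_zero[OF assms(1)] by simp
next
  case (insert \<phi> F)
  then have "\<phi> \<in> testfuns" "F \<subseteq> testfuns"
    by auto
  with insert show ?case
    by (simp add: distributions_add[OF assms(1)] distributions_scale[OF assms(1)]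
        scale_in_testfuns lincomb_in_testfuns)
qed

lemma zero_in_distributions: "(\<lambda>\<phi>. 0) \<in> distributions"
proof (rule distributionsI)
  show "\<exists>C N. \<forall>\<phi>\<in>testfuns. {x. \<phi> x \<noteq> 0} \<subseteq> K \<longrightarrow> norm (0 :: complex) \<le> C * seminorm N \<phi>" for K
    by (intro exI[of _ 0]) simp
qed simp_all

lemma lincomb_in_distributions:
  fixes S S' :: "'n::finite distr"
  assumes S: "S \<in> distributions" and S': "S' \<in> distributions"
  shows "(\<lambda>\<phi>. S \<phi> + c * S' \<phi>) \<in> distributions"
proof (rule distributionsI)
  fix K :: "(real^'n) set" assume K: "compact K"
  obtain C1 N1 where C1: "C1 \<ge> 0" and est1: "\<And>\<phi> M. \<phi> \<in> testfuns \<Longrightarrow> {x. \<phi> x \<noteq> 0} \<subseteq> K \<Longrightarrow>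
      N1 \<le> M \<Longrightarrow> norm (S \<phi>) \<le> C1 * seminorm M \<phi>"
    using distributions_estimate[OF S K] by blast
  obtain C2 N2 where C2: "C2 \<ge> 0" and est2: "\<And>\<phi> M. \<phi> \<in> testfuns \<Longrightarrow> {x. \<phi> x \<noteq> 0} \<subseteq> K \<Longrightarrow>
      N2 \<le> M \<Longrightarrow> norm (S' \<phi>) \<le> C2 * seminorm M \<phi>"
    using distributions_estimate[OF S' K] by blast
  let ?N = "max N1 N2"
  have "norm (S \<phi> + c * S' \<phi>) \<le> (C1 + norm c * C2) * seminorm ?N \<phi>"
    if "\<phi> \<in> testfuns" "{x. \<phi> x \<noteq> 0} \<subseteq> K" for \<phi>
  proof -
    have "norm (S \<phi> + c * S' \<phi>) \<le> norm (S \<phi>) + norm c * norm (S' \<phi>)"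
      using norm_triangle_ineq[of "S \<phi>" "c * S' \<phi>"] by (simp add: norm_mult)
    also have "\<dots> \<le> C1 * seminorm ?N \<phi> + norm c * (C2 * seminorm ?N \<phi>)"
      using est1[OF that] est2[OF that] by (intro add_mono mult_left_mono) auto
    finally show ?thesis
      by (simp add: algebra_simps)
  qed
  then show "\<exists>C N. \<forall>\<phi>\<in>testfuns. {x. \<phi> x \<noteq> 0} \<subseteq> K \<longrightarrow>
      norm (S \<phi> + c * S' \<phi>) \<le> C * seminorm N \<phi>"
    by blast
qed (use S S' in \<open>simp_all add: distributions_vanish distributions_add distributions_scale algebra_simps\<close>)

lemma scale_in_distributions: "S \<in> distributions \<Longrightarrow> (\<lambda>\<phi>. c * S \<phi>) \<in> distributions"
  using lincomb_in_distributions[OF zero_in_distributions] by simp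

lemma dirac_in_distributions: "dirac (p :: real^'n::finite) \<in> distributions"
proof (rule distributionsI)
  have "norm (dirac p \<phi>) \<le> 1 * seminorm 0 \<phi>" if "\<phi> \<in> testfuns" for \<phi>
    using seminorm_upper[OF that, of "[]" 0 p] that by (simp add: dirac_def)
  then show "\<exists>C N. \<forall>\<phi>\<in>testfuns. {x. \<phi> x \<noteq> 0} \<subseteq> K \<longrightarrow> norm (dirac p \<phi>) \<le> C * seminorm N \<phi>"
    for K :: "(real^'n) set"
    by blast
qed (simp_all add: dirac_def add_in_testfuns scale_in_testfuns)

definition dilation_factor :: "real^'n::finite \<Rightarrow> complex" where
  "dilation_factor a = complex_of_real (sgnprod a / (\<Prod>i\<in>UNIV. a $ i))"

definition dilate :: "real^'n::finite \<Rightarrow> 'n testfun \<Rightarrow> 'n testfun" where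
  "dilate a \<phi> = (\<lambda>x. dilation_factor a * \<phi> (cdiv x a))"

lemma dilation_eq: "dilation a S = (\<lambda>\<phi>. if \<phi> \<in> testfuns then S (dilate a \<phi>) else 0)"
  unfolding dilation_def dilate_def dilation_factor_def ..

lemma dilate_eq_scaled_cmult: "dilate a \<phi> = (\<lambda>x. dilation_factor a * \<phi> (cmult x (cdiv ones a)))"
  by (simp add: dilate_def cdiv_def cmult_def ones_def)

lemma dilate_in_testfuns: "\<phi> \<in> testfuns \<Longrightarrow> a \<in> Rstar \<Longrightarrow> dilate a \<phi> \<in> testfuns"
  unfolding dilate_eq_scaled_cmult by (intro scaled_cmult_in_testfuns Rstar_cdiv ones_in_Rstar)

lemma dilation_factor_nonzero: "a \<in> Rstar \<Longrightarrow> dilation_factor a \<noteq> 0"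
  by (simp add: dilation_factor_def sgnprod_def Rstar_def)

lemma support_dilate:
  assumes "a \<in> Rstar"
  shows "{x. dilate a \<phi> x \<noteq> 0} \<subseteq> (\<lambda>z. cmult z a) ` {x. \<phi> x \<noteq> 0}"
proof
  fix x assume "x \<in> {x. dilate a \<phi> x \<noteq> 0}"
  moreover have "x = cmult (cdiv x a) a"
    using assms by (simp add: cmult_def cdiv_def Rstar_def vec_eq_iff)
  ultimately show "x \<in> (\<lambda>z. cmult z a) ` {x. \<phi> x \<noteq> 0}"
    by (auto simp: dilate_def)
qed

lemma seminorm_dilate_le: "\<exists>C. \<forall>\<phi>\<in>testfuns. seminorm N (dilate a \<phi>) \<le> C * seminorm N \<phi>"
  unfolding dilate_eq_scaled_cmult by (rule seminorm_scaled_cmult_le)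

lemma dilation_in_distributions:
  fixes S :: "'n::finite distr"
  assumes S: "S \<in> distributions" and a: "a \<in> Rstar"
  shows "dilation a S \<in> distributions"
proof (rule distributionsI)
  fix K :: "(real^'n) set" assume "compact K"
  then have "compact ((\<lambda>z. cmult z a) ` K)"
    using linear_cmult
    by (intro compact_continuous_image linear_continuous_on) (auto simp: linear_conv_bounded_linear)
  then obtain C N where "C \<ge> 0" and est: "\<And>\<phi>. \<phi> \<in> testfuns \<Longrightarrow>
      {x. \<phi> x \<noteq> 0} \<subseteq> (\<lambda>z. cmult z a) ` K \<Longrightarrow> norm (S \<phi>) \<le> C * seminorm N \<phi>"
    using distributions_estimate[OF S] by (metis order_refl)
  obtain C' where C': "\<And>\<phi>. \<phi> \<in> testfuns \<Longrightarrow> seminorm N (dilate a \<phi>) \<le> C' * seminorm N \<phi>"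
    using seminorm_dilate_le by blast
  have "norm (dilation a S \<phi>) \<le> (C * C') * seminorm N \<phi>"
    if \<phi>: "\<phi> \<in> testfuns" and "{x. \<phi> x \<noteq> 0} \<subseteq> K" for \<phi>
  proof -
    have "{x. dilate a \<phi> x \<noteq> 0} \<subseteq> (\<lambda>z. cmult z a) ` K"
      using support_dilate[OF a, of \<phi>] that(2) by blast
    then have "norm (dilation a S \<phi>) \<le> C * seminorm N (dilate a \<phi>)"
      using est[OF dilate_in_testfuns[OF \<phi> a]] \<phi> by (simp add: dilation_eq)
    also have "\<dots> \<le> C * (C' * seminorm N \<phi>)"
      using C'[OF \<phi>] \<open>C \<ge> 0\<close> by (rule mult_left_mono)
    finally show ?thesis
      by (simp add: mult.assoc)
  qed
  then show "\<exists>C N. \<forall>\<phi>\<in>testfuns. {x. \<phi> x \<noteq> 0} \<subseteq> K \<longrightarrow>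
      norm (dilation a S \<phi>) \<le> C * seminorm N \<phi>"
    by blast
next
  fix \<phi> \<psi> :: "'n testfun" assume "\<phi> \<in> testfuns" "\<psi> \<in> testfuns"
  then show "dilation a S (\<lambda>x. \<phi> x + \<psi> x) = dilation a S \<phi> + dilation a S \<psi>"
    using S a
    by (simp add: dilation_eq add_in_testfuns dilate_def distrib_left
        distributions_add[symmetric] dilate_in_testfuns[unfolded dilate_def])
next
  fix \<phi> :: "'n testfun" and c assume "\<phi> \<in> testfuns"
  then show "dilation a S (\<lambda>x. c * \<phi> x) = c * dilation a S \<phi>"
    using S a
    by (simp add: dilation_eq scale_in_testfuns dilate_def mult.left_commute
        distributions_scale[symmetric] dilate_in_testfuns[unfolded dilate_def])
qed (simp add: dilation_eq)

section \<open>Continuous linear operators\<close>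

lemma lincomb_of_evaluations:
  fixes V :: "('b \<Rightarrow> complex) set" and g :: "('b \<Rightarrow> complex) \<Rightarrow> complex"
  assumes "finite F"
    and "\<And>S S' c. S \<in> V \<Longrightarrow> S' \<in> V \<Longrightarrow> (\<lambda>\<phi>. S \<phi> + c * S' \<phi>) \<in> V"
    and "\<And>S S' c. S \<in> V \<Longrightarrow> S' \<in> V \<Longrightarrow> g (\<lambda>\<phi>. S \<phi> + c * S' \<phi>) = g S + c * g S'"
    and "\<And>S. S \<in> V \<Longrightarrow> \<forall>\<phi>\<in>F. S \<phi> = 0 \<Longrightarrow> g S = 0"
  shows "\<exists>c. \<forall>S\<in>V. g S = (\<Sum>\<phi>\<in>F. c \<phi> * S \<phi>)"
  using assms
proof (induction F arbitrary: V rule: finite_induct)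
  case empty
  then show ?case by simp
next
  case (insert a F V)
  have "\<exists>c. \<forall>S\<in>{S\<in>V. S a = 0}. g S = (\<Sum>\<phi>\<in>F. c \<phi> * S \<phi>)"
    by (rule insert.IH) (use insert.prems in auto)
  then obtain c where c: "\<And>S. S \<in> V \<Longrightarrow> S a = 0 \<Longrightarrow> g S = (\<Sum>\<phi>\<in>F. c \<phi> * S \<phi>)"
    by blast
  have upd: "(\<Sum>\<phi>\<in>insert a F. (c(a := d)) \<phi> * S \<phi>) = d * S a + (\<Sum>\<phi>\<in>F. c \<phi> * S \<phi>)" for d S
  proof -
    have "(\<Sum>\<phi>\<in>F. (c(a := d)) \<phi> * S \<phi>) = (\<Sum>\<phi>\<in>F. c \<phi> * S \<phi>)"
      by (rule sum.cong) (use insert.hyps in auto)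
    then show ?thesis
      using insert.hyps by simp
  qed
  show ?case
  proof (cases "\<exists>S0\<in>V. S0 a \<noteq> 0")
    case False
    then have "g S = (\<Sum>\<phi>\<in>insert a F. (c(a := 0)) \<phi> * S \<phi>)" if "S \<in> V" for S
      using c[OF that] that upd by simp
    then show ?thesis by blast
  next
    case True
    then obtain S0 where S0: "S0 \<in> V" "S0 a \<noteq> 0"
      by blast
    define d where "d = (g S0 - (\<Sum>\<phi>\<in>F. c \<phi> * S0 \<phi>)) / S0 a"
    have "g S = (\<Sum>\<phi>\<in>insert a F. (c(a := d)) \<phi> * S \<phi>)" if S: "S \<in> V" for S
    proof -
      define t where "t = S a / S0 a"
      have "g S + (- t) * g S0 = g (\<lambda>\<phi>. S \<phi> + (- t) * S0 \<phi>)"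
        using insert.prems(2)[OF S S0(1), of "- t"] by (rule sym)
      also have "\<dots> = (\<Sum>\<phi>\<in>F. c \<phi> * (S \<phi> + (- t) * S0 \<phi>))"
      proof (rule c)
        show "(\<lambda>\<phi>. S \<phi> + (- t) * S0 \<phi>) \<in> V"
          using S S0(1) by (rule insert.prems(1))
        show "S a + (- t) * S0 a = 0"
          using S0(2) by (simp add: t_def)
      qed
      also have "\<dots> = (\<Sum>\<phi>\<in>F. c \<phi> * S \<phi>) - t * (\<Sum>\<phi>\<in>F. c \<phi> * S0 \<phi>)"
        by (simp add: sum_subtractf sum_distrib_left algebra_simps)
      finally have "g S = (\<Sum>\<phi>\<in>F. c \<phi> * S \<phi>) + t * (g S0 - (\<Sum>\<phi>\<in>F. c \<phi> * S0 \<phi>))"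
        by (simp add: algebra_simps)
      also have "\<dots> = d * S a + (\<Sum>\<phi>\<in>F. c \<phi> * S \<phi>)"
        using S0(2) by (simp add: t_def d_def)
      finally show ?thesis
        using upd by simp
    qed
    then show ?thesis by blast
  qed
qed

lemma cont_lin_op_distributions: "cont_lin_op L \<Longrightarrow> S \<in> distributions \<Longrightarrow> L S \<in> distributions"
  by (simp add: cont_lin_op_def)

lemma cont_lin_op_scale:
  "cont_lin_op L \<Longrightarrow> S \<in> distributions \<Longrightarrow> L (\<lambda>\<phi>. c * S \<phi>) = (\<lambda>\<phi>. c * L S \<phi>)"
  by (simp add: cont_lin_op_def)

lemma cont_lin_op_lincomb:
  assumes "cont_lin_op L" "S \<in> distributions" "S' \<in> distributions"
  shows "L (\<lambda>\<phi>. S \<phi> + c * S' \<phi>) = (\<lambda>\<phi>. L S \<phi> + c * L S' \<phi>)"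
  using assms scale_in_distributions[OF assms(3), of c]
  by (simp add: cont_lin_op_def cont_lin_op_scale[OF assms(1,3)])

lemma cont_lin_op_continuous:
  assumes "cont_lin_op L" "S \<in> distributions" "\<psi> \<in> testfuns" "\<epsilon> > 0"
  obtains F \<delta> where "finite F" "F \<subseteq> testfuns" "\<delta> > 0"
    and "\<And>S'. S' \<in> distributions \<Longrightarrow> \<forall>\<phi>\<in>F. norm (S' \<phi> - S \<phi>) < \<delta> \<Longrightarrow>
           norm (L S' \<psi> - L S \<psi>) < \<epsilon>"
proof -
  have "\<forall>S\<in>distributions. \<forall>\<psi>\<in>testfuns. \<forall>\<epsilon>>0. \<exists>F \<delta>. finite F \<and> F \<subseteq> testfuns \<and> \<delta> > 0 \<and>
      (\<forall>S'\<in>distributions. (\<forall>\<phi>\<in>F. norm (S' \<phi> - S \<phi>) < \<delta>) \<longrightarrow> norm (L S' \<psi> - L S \<psi>) < \<epsilon>)"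
    using assms(1) unfolding cont_lin_op_def by (elim conjE)
  from this[rule_format, OF assms(2-4)] obtain F \<delta> where "finite F" "F \<subseteq> testfuns" "\<delta> > 0"
    and "\<forall>S'\<in>distributions. (\<forall>\<phi>\<in>F. norm (S' \<phi> - S \<phi>) < \<delta>) \<longrightarrow> norm (L S' \<psi> - L S \<psi>) < \<epsilon>"
    by blast
  then show thesis
    by (intro that) auto
qed

lemma cont_lin_op_continuous_at_zero:
  assumes "cont_lin_op L" "\<psi> \<in> testfuns"
  obtains F \<delta> where "finite F" "F \<subseteq> testfuns" "\<delta> > 0"
    and "\<And>S. S \<in> distributions \<Longrightarrow> \<forall>\<phi>\<in>F. norm (S \<phi>) < \<delta> \<Longrightarrow> norm (L S \<psi>) < 1"
proof -
  have zero: "L (\<lambda>\<phi>. 0) = (\<lambda>\<phi>. 0)"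
    using cont_lin_op_scale[OF assms(1) zero_in_distributions, of 0] by simp
  obtain F \<delta> where F: "finite F" "F \<subseteq> testfuns" "\<delta> > 0"
    and close: "\<And>S. S \<in> distributions \<Longrightarrow> \<forall>\<phi>\<in>F. norm (S \<phi> - 0) < \<delta> \<Longrightarrow>
                  norm (L S \<psi> - L (\<lambda>\<phi>. 0) \<psi>) < 1"
    by (rule cont_lin_op_continuous[OF assms(1) zero_in_distributions assms(2), of 1]) auto
  show thesis
    by (rule that[OF F]) (use close in \<open>simp add: zero\<close>)
qed

lemma cont_lin_op_transpose:
  assumes L: "cont_lin_op L" and \<psi>: "\<psi> \<in> testfuns"
  obtains \<psi>' where "\<psi>' \<in> testfuns" "\<And>S. S \<in> distributions \<Longrightarrow> L S \<psi> = S \<psi>'"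
proof -
  obtain F \<delta> where F: "finite F" "F \<subseteq> testfuns" "\<delta> > 0"
    and small: "\<And>S. S \<in> distributions \<Longrightarrow> \<forall>\<phi>\<in>F. norm (S \<phi>) < \<delta> \<Longrightarrow> norm (L S \<psi>) < 1"
    using cont_lin_op_continuous_at_zero[OF L \<psi>] by blast
  have "L S \<psi> = 0" if S: "S \<in> distributions" and kernel: "\<forall>\<phi>\<in>F. S \<phi> = 0" for S
  proof (rule ccontr)
    assume nonzero: "L S \<psi> \<noteq> 0"
    define t where "t = complex_of_real (2 / norm (L S \<psi>))"
    have "norm (L (\<lambda>\<phi>. t * S \<phi>) \<psi>) < 1"
      using small[OF scale_in_distributions[OF S]] kernel F(3) by simp
    moreover have "norm (L (\<lambda>\<phi>. t * S \<phi>) \<psi>) = 2"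
      using nonzero unfolding cont_lin_op_scale[OF L S] by (simp add: norm_mult norm_divide t_def)
    ultimately show False
      by simp
  qed
  then have "\<exists>c. \<forall>S\<in>distributions. L S \<psi> = (\<Sum>\<phi>\<in>F. c \<phi> * S \<phi>)"
    using F(1) by (intro lincomb_of_evaluations)
      (simp_all add: lincomb_in_distributions cont_lin_op_lincomb[OF L])
  then obtain c where c: "\<forall>S\<in>distributions. L S \<psi> = (\<Sum>\<phi>\<in>F. c \<phi> * S \<phi>)"
    by blast
  show thesis
  proof (rule that)
    show "(\<lambda>x. \<Sum>\<phi>\<in>F. c \<phi> * \<phi> x) \<in> testfuns"
      using F(1,2) by (rule lincomb_in_testfuns)
    show "L S \<psi> = S (\<lambda>x. \<Sum>\<phi>\<in>F. c \<phi> * \<phi> x)" if "S \<in> distributions" for S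
      using c that distributions_lincomb[OF that F(1,2)] by simp
  qed
qed

section \<open>Multiplicative convolution\<close>

lemma hadamard_distr_imp_distributions: "T \<in> hadamard_distr \<Longrightarrow> T \<in> distributions"
  by (simp add: hadamard_distr_def)

lemma MT_someI:
  assumes "\<psi> \<in> testfuns" "\<forall>y\<in>Rstar. \<psi> y = T (\<lambda>\<xi>. \<phi> (cmult \<xi> y))"
  shows "MT T \<phi> \<in> testfuns \<and> (\<forall>y\<in>Rstar. MT T \<phi> y = T (\<lambda>\<xi>. \<phi> (cmult \<xi> y)))"
  unfolding MT_def by (rule someI[of _ \<psi>]) (use assms in blast)

lemma
  assumes "T \<in> hadamard_distr" "\<phi> \<in> testfuns"
  shows MT_in_testfuns: "MT T \<phi> \<in> testfuns"
    and MT_apply: "y \<in> Rstar \<Longrightarrow> MT T \<phi> y = T (\<lambda>\<xi>. \<phi> (cmult \<xi> y))"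
  using assms MT_someI unfolding hadamard_distr_def by blast+

lemma MT_unique:
  assumes "\<psi> \<in> testfuns" "\<And>y. y \<in> Rstar \<Longrightarrow> \<psi> y = T (\<lambda>\<xi>. \<phi> (cmult \<xi> y))"
  shows "MT T \<phi> = \<psi>"
  using assms MT_someI[of \<psi> T \<phi>] by (intro testfuns_eqI) auto

lemma MT_dilate:
  fixes a :: "real^'n::finite"
  assumes T: "T \<in> hadamard_distr" and \<phi>: "\<phi> \<in> testfuns" and a: "a \<in> Rstar"
  shows "MT T (dilate a \<phi>) = dilate a (MT T \<phi>)"
proof (rule MT_unique)
  show "dilate a (MT T \<phi>) \<in> testfuns"
    by (intro dilate_in_testfuns MT_in_testfuns T \<phi> a)
next
  fix y :: "real^'n" assume "y \<in> Rstar"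
  then have ya: "cdiv y a \<in> Rstar"
    using a by (rule Rstar_cdiv)
  have "T (\<lambda>\<xi>. dilate a \<phi> (cmult \<xi> y)) = T (\<lambda>\<xi>. dilation_factor a * \<phi> (cmult \<xi> (cdiv y a)))"
    by (simp add: dilate_def cdiv_cmult)
  also have "\<dots> = dilation_factor a * T (\<lambda>\<xi>. \<phi> (cmult \<xi> (cdiv y a)))"
    using hadamard_distr_imp_distributions[OF T] cmult_in_testfuns[OF \<phi> ya]
    by (rule distributions_scale)
  also have "\<dots> = dilate a (MT T \<phi>) y"
    by (simp add: dilate_def MT_apply[OF T \<phi> ya])
  finally show "dilate a (MT T \<phi>) y = T (\<lambda>\<xi>. dilate a \<phi> (cmult \<xi> y))" ..
qed

lemma mconv_dilation:
  assumes "T \<in> hadamard_distr" "a \<in> Rstar"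
  shows "mconv (dilation a S) T = dilation a (mconv S T)"
  using assms by (simp add: fun_eq_iff mconv_def dilation_eq MT_in_testfuns dilate_in_testfuns MT_dilate)

lemma mconv_dirac_ones:
  assumes "T \<in> hadamard_distr"
  shows "mconv (dirac ones) T = T"
proof
  fix \<phi>
  show "mconv (dirac ones) T \<phi> = T \<phi>"
    using assms distributions_vanish[OF hadamard_distr_imp_distributions[OF assms]]
    by (simp add: mconv_def dirac_def MT_in_testfuns MT_apply[OF _ _ ones_in_Rstar])
qed

lemma dilation_dirac:
  assumes "a \<in> Rstar"
  shows "dilation a (dirac p) = (\<lambda>\<rho>. dilation_factor a * dirac (cdiv p a) \<rho>)"
  using assms by (simp add: fun_eq_iff dilation_eq dirac_def dilate_in_testfuns) (simp add: dilate_def)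

lemma dilation_commuting_transpose:
  assumes L: "cont_lin_op L"
    and commute: "\<And>a S. a \<in> Rstar \<Longrightarrow> S \<in> distributions \<Longrightarrow> L (dilation a S) = dilation a (L S)"
    and \<phi>: "\<phi> \<in> testfuns" and "\<phi>' \<in> testfuns"
    and transpose: "\<And>S. S \<in> distributions \<Longrightarrow> L S \<phi> = S \<phi>'"
    and y: "y \<in> Rstar"
  shows "\<phi>' y = L (dirac ones) (\<lambda>\<xi>. \<phi> (cmult \<xi> y))"
proof -
  define a where "a = cdiv ones y"
  have a: "a \<in> Rstar"
    unfolding a_def using ones_in_Rstar y by (rule Rstar_cdiv)
  let ?k = "dilation_factor a"
  have "?k * \<phi>' y = ?k * L (dirac y) \<phi>"
    using transpose[OF dirac_in_distributions, of y] \<open>\<phi>' \<in> testfuns\<close> by (simp add: dirac_def)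
  also have "\<dots> = L (dilation a (dirac ones)) \<phi>"
    using a y by (simp add: dilation_dirac a_def cdiv_ones_cdiv_ones cont_lin_op_scale[OF L dirac_in_distributions])
  also have "\<dots> = L (dirac ones) (\<lambda>\<xi>. ?k * \<phi> (cmult \<xi> y))"
    using commute[OF a dirac_in_distributions] \<phi> y by (simp add: dilation_eq dilate_def a_def cdiv_cdiv_ones)
  also have "\<dots> = ?k * L (dirac ones) (\<lambda>\<xi>. \<phi> (cmult \<xi> y))"
    using cont_lin_op_distributions[OF L dirac_in_distributions] cmult_in_testfuns[OF \<phi> y]
    by (rule distributions_scale)
  finally show ?thesis
    using dilation_factor_nonzero[OF a] by simp
qed

lemma dilation_commuting_imp_mconv:
  assumes L: "cont_lin_op L"
    and commute: "\<And>a S. a \<in> Rstar \<Longrightarrow> S \<in> distributions \<Longrightarrow> L (dilation a S) = dilation a (L S)"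
  shows "L (dirac ones) \<in> hadamard_distr"
    and "S \<in> distributions \<Longrightarrow> L S = mconv S (L (dirac ones))"
proof -
  let ?T = "L (dirac ones)"
  have kernel: "\<exists>\<phi>'\<in>testfuns. (\<forall>S\<in>distributions. L S \<phi> = S \<phi>') \<and>
      (\<forall>y\<in>Rstar. \<phi>' y = ?T (\<lambda>\<xi>. \<phi> (cmult \<xi> y)))" if \<phi>: "\<phi> \<in> testfuns" for \<phi>
  proof -
    obtain \<phi>' where \<phi>': "\<phi>' \<in> testfuns"
      and transpose: "\<And>S. S \<in> distributions \<Longrightarrow> L S \<phi> = S \<phi>'"
      using cont_lin_op_transpose[OF L \<phi>] by blast
    with dilation_commuting_transpose[OF L commute \<phi> \<phi>' transpose] show ?thesis
      by blast
  qed
  show "?T \<in> hadamard_distr"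
    using kernel cont_lin_op_distributions[OF L dirac_in_distributions]
    unfolding hadamard_distr_def by blast
  show "L S = mconv S ?T" if S: "S \<in> distributions"
  proof
    fix \<phi>
    show "L S \<phi> = mconv S ?T \<phi>"
    proof (cases "\<phi> \<in> testfuns")
      case True
      then obtain \<phi>' where "\<phi>' \<in> testfuns" "\<forall>S\<in>distributions. L S \<phi> = S \<phi>'"
        "\<forall>y\<in>Rstar. \<phi>' y = ?T (\<lambda>\<xi>. \<phi> (cmult \<xi> y))"
        using kernel by blast
      with S True show ?thesis
        by (simp add: mconv_def MT_unique)
    next
      case False
      then show ?thesis
        using distributions_vanish[OF cont_lin_op_distributions[OF L S]] by (simp add: mconv_def)
    qed
  qed
qed

theorem theorem1:
  fixes L :: "'n::finite distr \<Rightarrow> 'n distr"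
  assumes "cont_lin_op L"
  shows "((\<forall>a\<in>Rstar. \<forall>S\<in>distributions. L (dilation a S) = dilation a (L S)) \<longleftrightarrow>
          (\<exists>T\<in>hadamard_distr. \<forall>S\<in>distributions. L S = mconv S T))
       \<and> (\<forall>T\<in>hadamard_distr. (\<forall>S\<in>distributions. L S = mconv S T) \<longrightarrow> T = L (dirac ones))"
proof -
  have commute_imp_mconv: "\<exists>T\<in>hadamard_distr. \<forall>S\<in>distributions. L S = mconv S T"
    if "\<forall>a\<in>Rstar. \<forall>S\<in>distributions. L (dilation a S) = dilation a (L S)"
    using dilation_commuting_imp_mconv[OF assms] that by blast
  have mconv_imp_commute: "\<forall>a\<in>Rstar. \<forall>S\<in>distributions. L (dilation a S) = dilation a (L S)"
    if "T \<in> hadamard_distr" "\<forall>S\<in>distributions. L S = mconv S T" for T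
    using that by (simp add: dilation_in_distributions mconv_dilation)
  have kernel_unique: "T = L (dirac ones)"
    if "T \<in> hadamard_distr" "\<forall>S\<in>distributions. L S = mconv S T" for T
    using that dirac_in_distributions mconv_dirac_ones by metis
  show ?thesis
    using commute_imp_mconv mconv_imp_commute kernel_unique by blast
qed

end
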